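(* For $\theta\in(0,1)$ let $P_\theta$ be the geometric distribution $p_\theta(i)=(1-\theta)\theta^i$, $i\ge 0$, and let $N_\theta^{**}$ be the lengths of a binary prefix code minimizing the maximal pointwise redundancy $R^*(N,P_\theta)=\sup_{i\ge 0}[n(i)+\log_2 p_\theta(i)]$. Then $$\liminf_{\theta\uparrow1}R^*(N_\theta^{**},P_\theta)=1-\log_2\log_2 e,\qquad \limsup_{\theta\uparrow1}R^*(N_\theta^{**},P_\theta)=2-\log_2 e,$$ where $e$ is the base of the natural logarithm.
   Context: A binary prefix code for the nonnegative integers assigns to each $i\ge0$ a codeword in $\{0,1\}^*$ such that no codeword is a prefix of another; $n(i)$ is the length of the codeword for $i$ and $N=\{n(i)\}$. *)

theory Defs
  imports "HOL-Analysis.Analysis" "HOL-Library.Sublist"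
begin

definition prefix_code :: "(nat \<Rightarrow> bool list) \<Rightarrow> bool" where
  "prefix_code c \<longleftrightarrow> (\<forall>i j. i \<noteq> j \<longrightarrow> \<not> prefix (c i) (c j))"

definition geom_p :: "real \<Rightarrow> nat \<Rightarrow> real" where
  "geom_p \<theta> i = (1 - \<theta>) * \<theta> ^ i"

definition max_redundancy :: "(nat \<Rightarrow> nat) \<Rightarrow> (nat \<Rightarrow> real) \<Rightarrow> ereal" where
  "max_redundancy n p = (SUP i. ereal (real (n i) + log 2 (p i)))"

definition prefix_code_lengths :: "(nat \<Rightarrow> nat) \<Rightarrow> bool" where
  "prefix_code_lengths n \<longleftrightarrow> (\<exists>c. prefix_code c \<and> (\<forall>i. length (c i) = n i))"

text \<open>R*(N_theta^{**}, P_theta): the minimal value of the maximal pointwise redundancy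
  over all binary prefix codes.\<close>
definition opt_max_redundancy :: "real \<Rightarrow> ereal" where
  "opt_max_redundancy \<theta> = (INF n\<in>{n. prefix_code_lengths n}. max_redundancy n (geom_p \<theta>))"

end

theory Submission
  imports Defs
begin

text \<open>A length function \<open>n\<close> has pointwise redundancy at most \<open>R\<close> for \<open>P\<^sub>\<theta>\<close>
  iff \<open>n i \<le> x + i a\<close>, where \<open>a = -log\<^sub>2 \<theta>\<close> and \<open>x = R - log\<^sub>2 (1 - \<theta>)\<close>. By the Kraft
  inequality and its converse for nondecreasing lengths, \<open>R\<close> is achievable iff the Kraft sums
  of \<open>\<lfloor>x + i a\<rfloor>\<close> are at most 1. These are Riemann sums, with mesh \<open>a\<close>, of the staircase
  \<open>2 ^ -\<lfloor>t\<rfloor>\<close>, whose integral over \<open>[x, \<infinity>)\<close> is \<open>2 ^ -x \<psi>(frac x)\<close> with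
  \<open>\<psi>(r) = 2 ^ r (2 - r)\<close>. As \<open>\<theta> \<rightarrow> 1\<close>, \<open>a \<sim> (1 - \<theta>) log\<^sub>2 e\<close> and \<open>2 ^ -x = (1 - \<theta>) 2 ^ -R\<close>,
  so the optimal redundancy approaches \<open>log\<^sub>2 (\<psi>(frac x) / log\<^sub>2 e)\<close>, while \<open>frac x\<close> sweeps
  through \<open>[0, 1)\<close> infinitely often. The range \<open>[2, log\<^sub>2 e \<cdot> 2 ^ (2 - log\<^sub>2 e)]\<close> of \<open>\<psi>\<close>
  on \<open>[0, 1]\<close> gives the two limits.\<close>

section \<open>Kraft inequality and canonical codes\<close>

lemma card_prefix_extensions:
  fixes w :: "bool list"
  assumes "length w \<le> L"
  shows "card {v. length v = L \<and> prefix w v} = 2 ^ (L - length w)"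
proof -
  have "{v. length v = L \<and> prefix w v} = (\<lambda>u. w @ u) ` {u. length u = L - length w}"
    using assms by (auto simp: prefix_def)
  moreover have "inj_on (\<lambda>u. w @ u) {u. length u = L - length w}"
    by (auto simp: inj_on_def)
  ultimately show ?thesis
    using card_lists_length_eq[of "UNIV :: bool set" "L - length w"] by (simp add: card_image)
qed

text \<open>Count the words of the maximal codeword length \<open>L\<close>: those extending different codewords
  are different.\<close>
theorem kraft_inequality:
  assumes "prefix_code c"
  shows "(\<Sum>i<K. (1/2::real) ^ length (c i)) \<le> 1"
proof -
  define L where "L = Max ((\<lambda>i. length (c i)) ` {..<K})"
  define E where "E i = {v :: bool list. length v = L \<and> prefix (c i) v}" for i
  have len_le: "length (c i) \<le> L" if "i < K" for i
    using that by (auto simp: L_def intro: Max_ge)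
  have words_finite: "finite {v :: bool list. length v = L}"
    using finite_lists_length_eq[of "UNIV :: bool set" L] by simp
  have disjoint: "E i \<inter> E j = {}" if "i \<noteq> j" for i j
  proof (rule ccontr)
    assume "E i \<inter> E j \<noteq> {}"
    then obtain v where "prefix (c i) v" "prefix (c j) v"
      by (auto simp: E_def)
    then have "prefix (c i) (c j) \<or> prefix (c j) (c i)"
      using prefix_same_cases by blast
    with assms \<open>i \<noteq> j\<close> show False
      unfolding prefix_code_def by metis
  qed
  have "(\<Sum>i<K. card (E i)) = card (\<Union>i<K. E i)"
    using words_finite disjoint
    by (intro card_UN_disjoint[symmetric]) (auto simp: E_def intro: rev_finite_subset)
  also have "\<dots> \<le> card {v :: bool list. length v = L}"
    by (rule card_mono[OF words_finite]) (auto simp: E_def)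
  also have "\<dots> = 2 ^ L"
    using card_lists_length_eq[of "UNIV :: bool set" L] by simp
  finally have "real (\<Sum>i<K. card (E i)) \<le> 2 ^ L"
    by (metis of_nat_le_iff of_nat_numeral of_nat_power)
  moreover have "real (card (E i)) = 2 ^ L * (1/2) ^ length (c i)" if "i < K" for i
  proof -
    have "real (card (E i)) = 2 ^ (L - length (c i))"
      using len_le[OF that] by (simp add: E_def card_prefix_extensions)
    also have "\<dots> = 2 ^ L * (1/2) ^ length (c i)"
      using len_le[OF that] by (simp add: power_diff power_one_over)
    finally show ?thesis .
  qed
  ultimately have "2 ^ L * (\<Sum>i<K. (1/2::real) ^ length (c i)) \<le> 2 ^ L"
    by (simp add: sum_distrib_left)
  then show ?thesis
    by simp
qed

definition bin_digits :: "nat \<Rightarrow> nat \<Rightarrow> bool list" where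
  "bin_digits N L = map (\<lambda>k. odd (N div 2 ^ (L - 1 - k))) [0..<L]"

lemma length_bin_digits [simp]: "length (bin_digits N L) = L"
  by (simp add: bin_digits_def)

lemma take_bin_digits:
  assumes "k \<le> L"
  shows "take k (bin_digits N L) = bin_digits (N div 2 ^ (L - k)) k"
proof -
  have "take k (bin_digits N L) = map (\<lambda>j. odd (N div 2 ^ (L - 1 - j))) [0..<k]"
    unfolding bin_digits_def using assms by (simp add: take_map)
  also have "\<dots> = bin_digits (N div 2 ^ (L - k)) k"
    unfolding bin_digits_def
  proof (intro map_cong refl)
    fix j assume "j \<in> set [0..<k]"
    then have "L - 1 - j = (L - k) + (k - 1 - j)"
      using assms by simp
    then show "odd (N div 2 ^ (L - 1 - j)) = odd (N div 2 ^ (L - k) div 2 ^ (k - 1 - j))"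
      by (simp add: power_add div_mult2_eq)
  qed
  finally show ?thesis .
qed

lemma bin_digits_inj:
  assumes "N < 2 ^ L" "M < 2 ^ L" "bin_digits N L = bin_digits M L"
  shows "N = M"
proof (rule bit_eqI)
  fix t
  show "bit N t = bit M t"
  proof (cases "t < L")
    case True
    then have "L - 1 - (L - 1 - t) = t"
      by simp
    moreover have "bin_digits N L ! (L - 1 - t) = bin_digits M L ! (L - 1 - t)"
      using assms(3) by simp
    ultimately show ?thesis
      using True by (simp add: bin_digits_def bit_iff_odd)
  next
    case False
    then have "(2::nat) ^ L \<le> 2 ^ t"
      by simp
    then have "N div 2 ^ t = 0" "M div 2 ^ t = 0"
      using assms(1,2) by (intro div_less; linarith)+
    then show ?thesis
      by (simp add: bit_iff_odd)
  qed
qed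

text \<open>For nondecreasing lengths \<open>n\<close>, \<open>kraft_index n i\<close> is the partial Kraft sum
  \<open>\<Sum>j<i. 2^-n j\<close> written as a numerator over \<open>2 ^ n i\<close>;
  the canonical code uses its \<open>n i\<close> binary digits as the \<open>i\<close>-th codeword.\<close>
primrec kraft_index :: "(nat \<Rightarrow> nat) \<Rightarrow> nat \<Rightarrow> nat" where
  "kraft_index n 0 = 0"
| "kraft_index n (Suc i) = (kraft_index n i + 1) * 2 ^ (n (Suc i) - n i)"

lemma real_kraft_index:
  assumes "mono n"
  shows "real (kraft_index n i) = 2 ^ n i * (\<Sum>j<i. (1/2::real) ^ n j)"
proof (induction i)
  case 0
  then show ?case by simp
next
  case (Suc i)
  have "n i \<le> n (Suc i)"
    using assms by (simp add: monoD)
  then have "(2::real) ^ n (Suc i) = 2 ^ (n (Suc i) - n i) * 2 ^ n i"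
    by (simp add: power_add[symmetric])
  moreover have "(2::real) ^ n i * (1/2) ^ n i = 1"
    by (simp add: power_one_over)
  ultimately show ?case
    by (simp add: Suc algebra_simps)
qed

lemma kraft_index_less:
  assumes "mono n" and kraft: "(\<Sum>j<Suc i. (1/2::real) ^ n j) \<le> 1"
  shows "kraft_index n i < 2 ^ n i"
proof -
  have "(0::real) < (1/2) ^ n i"
    by simp
  then have "(\<Sum>j<i. (1/2::real) ^ n j) < 1"
    using kraft unfolding sum.lessThan_Suc by linarith
  then have "real (kraft_index n i) < 2 ^ n i"
    unfolding real_kraft_index[OF assms(1)] by simp
  then show ?thesis
    by (metis of_nat_less_iff of_nat_numeral of_nat_power)
qed

lemma kraft_index_gap:
  assumes "mono n" "j < i"
  shows "(kraft_index n j + 1) * 2 ^ (n i - n j) \<le> kraft_index n i"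
  using assms(2)
proof (induction i)
  case 0
  then show ?case by simp
next
  case (Suc i)
  show ?case
  proof (cases "j = i")
    case True
    then show ?thesis by simp
  next
    case False
    then have "j < i"
      using Suc.prems by simp
    have "n j \<le> n i" "n i \<le> n (Suc i)"
      using assms(1) \<open>j < i\<close> by (simp_all add: monoD)
    then have "n (Suc i) - n j = (n i - n j) + (n (Suc i) - n i)"
      by simp
    then have "(kraft_index n j + 1) * 2 ^ (n (Suc i) - n j)
        = (kraft_index n j + 1) * 2 ^ (n i - n j) * 2 ^ (n (Suc i) - n i)"
      by (simp only: power_add mult.assoc)
    also have "\<dots> \<le> kraft_index n i * 2 ^ (n (Suc i) - n i)"
      using Suc.IH[OF \<open>j < i\<close>] by (rule mult_right_mono) simp
    also have "\<dots> \<le> kraft_index n (Suc i)"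
      by simp
    finally show ?thesis .
  qed
qed

theorem prefix_code_lengths_if_kraft:
  assumes "mono n" and kraft: "\<And>K. (\<Sum>i<K. (1/2::real) ^ n i) \<le> 1"
  shows "prefix_code_lengths n"
proof -
  define c where "c i = bin_digits (kraft_index n i) (n i)" for i
  have index_less: "kraft_index n i < 2 ^ n i" for i
    using kraft_index_less[OF assms(1) kraft] .
  have "\<not> prefix (c i) (c j)" if "i \<noteq> j" for i j
  proof
    assume pre: "prefix (c i) (c j)"
    then have le: "n i \<le> n j"
      using prefix_length_le by (fastforce simp: c_def)
    define M where "M = kraft_index n j div 2 ^ (n j - n i)"
    have "take (n i) (c j) = c i"
      using pre by (auto simp: prefix_def c_def)
    then have "bin_digits M (n i) = c i"
      using take_bin_digits[OF le] by (simp add: c_def M_def)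
    moreover have "M < 2 ^ n i"
      using index_less[of j] le
      by (simp add: M_def div_less_iff_less_mult power_add[symmetric])
    ultimately have M: "M = kraft_index n i"
      using bin_digits_inj index_less unfolding c_def by blast
    show False
    proof (cases "i < j")
      case True
      have "kraft_index n i + 1 \<le> M"
        unfolding M_def using kraft_index_gap[OF assms(1) True]
        by (subst less_eq_div_iff_mult_less_eq) simp_all
      then show False
        using M by simp
    next
      case False
      then have "j < i" "n i = n j"
        using \<open>i \<noteq> j\<close> le assms(1) by (auto simp: monoD dual_order.antisym)
      then show False
        using kraft_index_gap[OF assms(1) \<open>j < i\<close>] M by (simp add: M_def)
    qed
  qed
  then show ?thesis
    unfolding prefix_code_lengths_def prefix_code_def by (intro exI[of _ c]) (simp add: c_def)
qed

section \<open>Riemann sums of the dyadic staircase\<close>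

definition staircase :: "real \<Rightarrow> real" where
  "staircase x = 2 powr (- of_int \<lfloor>x\<rfloor>)"

text \<open>\<open>staircase_tail x = \<integral>\<^sub>x\<^sup>\<infinity> staircase\<close>. Kraft sums of codeword lengths
  \<open>\<lfloor>x + i a\<rfloor>\<close> are Riemann sums of \<open>staircase\<close> with mesh \<open>a\<close>, so they are
  compared with \<open>staircase_tail x / a\<close>.\<close>
definition staircase_tail :: "real \<Rightarrow> real" where
  "staircase_tail x = 2 powr (- of_int \<lfloor>x\<rfloor>) * (2 - frac x)"

definition tail_profile :: "real \<Rightarrow> real" where
  "tail_profile r = 2 powr r * (2 - r)"

lemma staircase_pos: "0 < staircase x"
  by (simp add: staircase_def)

lemma staircase_tail_pos: "0 < staircase_tail x"
  using frac_lt_1[of x] by (simp add: staircase_tail_def)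

lemma staircase_le: "staircase x \<le> 2 powr (1 - x)"
  unfolding staircase_def by (intro powr_mono) linarith+

lemma staircase_eq_power: "\<lfloor>x\<rfloor> = int m \<Longrightarrow> staircase x = (1/2) ^ m"
  by (simp add: staircase_def powr_minus powr_realpow power_one_over inverse_eq_divide)

lemma staircase_le_power_iff: "staircase x \<le> (1/2) ^ m \<longleftrightarrow> int m \<le> \<lfloor>x\<rfloor>"
proof -
  have "(1/2::real) ^ m = 2 powr (- real m)"
    by (simp add: powr_minus powr_realpow power_one_over inverse_eq_divide)
  then show ?thesis
    unfolding staircase_def by simp (metis of_int_le_iff of_int_of_nat_eq)
qed

lemma staircase_tail_eq_profile: "staircase_tail x = 2 powr (- x) * tail_profile (frac x)"
  by (simp add: staircase_tail_def tail_profile_def frac_def powr_add[symmetric])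

lemma staircase_tail_le: "staircase_tail x \<le> 4 * 2 powr (- x)"
proof -
  have "staircase_tail x = staircase x * (2 - frac x)"
    by (simp add: staircase_tail_def staircase_def)
  also have "\<dots> \<le> 2 powr (1 - x) * 2"
    using frac_lt_1[of x] by (intro mult_mono staircase_le) simp_all
  also have "\<dots> = 4 * 2 powr (- x)"
    by (simp add: powr_diff powr_minus divide_inverse)
  finally show ?thesis .
qed

lemma ex_staircase_tail_less:
  assumes "0 < a" "0 < \<delta>"
  shows "\<exists>K. staircase_tail (x + real K * a) < \<delta>"
proof -
  define T where "T = 3 - log 2 \<delta>"
  have "4 * 2 powr (- T) = \<delta> / 2"
    using assms(2) by (simp add: T_def powr_diff)
  obtain K :: nat where K: "T - x < real K * a"
    using reals_Archimedean3[OF assms(1)] by blast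
  have "staircase_tail (x + real K * a) \<le> 4 * 2 powr (- (x + real K * a))"
    by (rule staircase_tail_le)
  also have "\<dots> \<le> 4 * 2 powr (- T)"
    using K by (intro mult_left_mono powr_mono) auto
  also have "\<dots> < \<delta>"
    using \<open>4 * 2 powr (- T) = \<delta> / 2\<close> assms(2) by simp
  finally show ?thesis ..
qed

lemma staircase_tail_diff_bounds:
  assumes "s \<le> t" "t \<le> s + 1"
  shows "(t - s) * staircase t \<le> staircase_tail s - staircase_tail t"
    and "staircase_tail s - staircase_tail t \<le> (t - s) * staircase s"
proof -
  define k where "k = \<lfloor>s\<rfloor>"
  define p where "p = (2::real) powr (- of_int k)"
  have "p > 0"
    by (simp add: p_def)
  have s: "of_int k \<le> s" "s < of_int k + 1"
    unfolding k_def by linarith+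
  then have "\<lfloor>t\<rfloor> = k \<or> \<lfloor>t\<rfloor> = k + 1"
    using assms by linarith
  then have "(t - s) * staircase t \<le> staircase_tail s - staircase_tail t
      \<and> staircase_tail s - staircase_tail t \<le> (t - s) * staircase s"
  proof
    assume "\<lfloor>t\<rfloor> = k"
    then show ?thesis
      by (simp add: staircase_tail_def staircase_def frac_def k_def[symmetric] algebra_simps)
  next
    assume t: "\<lfloor>t\<rfloor> = k + 1"
    have half: "(2::real) powr (- of_int \<lfloor>t\<rfloor>) = p / 2"
      unfolding t by (simp add: p_def powr_diff diff_conv_add_uminus[symmetric])
    have diff: "staircase_tail s - staircase_tail t = p * ((1 + of_int k - 2 * s + t) / 2)"
      unfolding staircase_tail_def frac_def half using t
      by (simp add: k_def[symmetric] p_def[symmetric] algebra_simps)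
    have step: "staircase s = p" "staircase t = p / 2"
      using half by (simp_all add: staircase_def k_def[symmetric] p_def)
    have "p * ((t - s) / 2) \<le> p * ((1 + of_int k - 2 * s + t) / 2)"
        "p * ((1 + of_int k - 2 * s + t) / 2) \<le> p * (t - s)"
      using s of_int_floor_le[of t] \<open>p > 0\<close> unfolding t by (intro mult_left_mono; simp)+
    then show ?thesis
      unfolding diff step by (simp add: algebra_simps)
  qed
  then show "(t - s) * staircase t \<le> staircase_tail s - staircase_tail t"
    and "staircase_tail s - staircase_tail t \<le> (t - s) * staircase s"
    by simp_all
qed

lemma staircase_tail_diff_le_sum:
  assumes "0 < a" "a \<le> 1"
  shows "staircase_tail x - staircase_tail (x + real K * a)
    \<le> a * (\<Sum>i<K. staircase (x + real i * a))"
proof (induction K)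
  case 0
  then show ?case by simp
next
  case (Suc K)
  have "staircase_tail (x + real K * a) - staircase_tail (x + real (Suc K) * a)
      \<le> a * staircase (x + real K * a)"
    using staircase_tail_diff_bounds(2)[of "x + real K * a" "x + real (Suc K) * a"] assms
    by (simp add: algebra_simps)
  then show ?case
    using Suc by (simp add: algebra_simps)
qed

lemma sum_staircase_le_tail:
  assumes "0 < a" "a \<le> 1"
  shows "a * (\<Sum>i<K. staircase (x + real i * a)) \<le> a * staircase x + staircase_tail x"
proof -
  have "a * (\<Sum>i<K. staircase (x + real i * a)) + a * staircase (x + real K * a)
      \<le> a * staircase x + staircase_tail x - staircase_tail (x + real K * a)" for K
  proof (induction K)
    case 0
    then show ?case by simp
  next
    case (Suc K)
    have "a * staircase (x + real (Suc K) * a)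
        \<le> staircase_tail (x + real K * a) - staircase_tail (x + real (Suc K) * a)"
      using staircase_tail_diff_bounds(1)[of "x + real K * a" "x + real (Suc K) * a"] assms
      by (simp add: algebra_simps)
    then show ?case
      using Suc by (simp add: algebra_simps)
  qed
  moreover have "0 < a * staircase (x + real K * a)" "0 < staircase_tail (x + real K * a)"
    using assms(1) staircase_pos staircase_tail_pos by simp_all
  ultimately show ?thesis
    by (smt (verit))
qed

section \<open>Optimal redundancy for fixed \<open>\<theta>\<close>\<close>

lemma log_geom_p:
  assumes "0 < \<theta>" "\<theta> < 1"
  shows "log 2 (geom_p \<theta> i) = log 2 (1 - \<theta>) + real i * log 2 \<theta>"
  using assms by (simp add: geom_p_def log_mult log_nat_power)

lemma neg_log2_pos_le_1:
  assumes "1/2 \<le> \<theta>" "\<theta> < 1"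
  shows "0 < - log 2 \<theta>" and "- log 2 \<theta> \<le> 1"
proof -
  show "0 < - log 2 \<theta>"
    using assms by simp
  have "log 2 (1/2) \<le> log 2 \<theta>"
    using assms by simp
  then show "- log 2 \<theta> \<le> 1"
    by (simp add: log_divide)
qed

text \<open>The codeword lengths \<open>n i = \<lfloor>x + i a\<rfloor>\<close> achieve redundancy at most \<open>R\<close>, and
  the hypothesis makes their Kraft sums at most 1.\<close>
theorem opt_max_redundancy_le:
  fixes \<theta> R :: real
  assumes \<theta>: "1/2 \<le> \<theta>" "\<theta> < 1"
  defines "a \<equiv> - log 2 \<theta>" and "x \<equiv> R - log 2 (1 - \<theta>)"
  assumes tail: "staircase_tail x \<le> a * (1 - staircase x)"
  shows "opt_max_redundancy \<theta> \<le> ereal R"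
proof -
  have a: "0 < a" "a \<le> 1"
    unfolding a_def using neg_log2_pos_le_1[OF \<theta>] by simp_all
  have "0 < a * (1 - staircase x)"
    using staircase_tail_pos[of x] tail by linarith
  then have "staircase x < 1"
    using a by (simp add: zero_less_mult_iff)
  then have "0 \<le> \<lfloor>x\<rfloor>"
    using staircase_le_power_iff[of x 0] by simp
  define n where "n i = nat \<lfloor>x + real i * a\<rfloor>" for i
  have floor_le: "\<lfloor>x\<rfloor> \<le> \<lfloor>x + real i * a\<rfloor>" for i
    using a by (intro floor_mono) simp
  have n: "int (n i) = \<lfloor>x + real i * a\<rfloor>" for i
    unfolding n_def using floor_le[of i] \<open>0 \<le> \<lfloor>x\<rfloor>\<close> by (intro nat_0_le) linarith
  have "mono n"
    unfolding mono_def n_def using a by (intro allI impI nat_mono floor_mono) simp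
  moreover have "(\<Sum>i<K. (1/2::real) ^ n i) \<le> 1" for K
  proof -
    have "a * (\<Sum>i<K. staircase (x + real i * a)) \<le> a * staircase x + staircase_tail x"
      using sum_staircase_le_tail[OF a] .
    also have "\<dots> \<le> a"
      using tail by (simp add: algebra_simps)
    finally have "(\<Sum>i<K. staircase (x + real i * a)) \<le> 1"
      using a by simp
    then show ?thesis
      using staircase_eq_power[OF n[symmetric]] by simp
  qed
  ultimately have "prefix_code_lengths n"
    by (rule prefix_code_lengths_if_kraft)
  moreover have "max_redundancy n (geom_p \<theta>) \<le> ereal R"
    unfolding max_redundancy_def
  proof (rule SUP_least)
    fix i
    have "real (n i) \<le> x + real i * a"
      using n[of i] by (metis of_int_floor_le of_int_of_nat_eq)
    then show "ereal (real (n i) + log 2 (geom_p \<theta> i)) \<le> ereal R"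
      using \<theta> by (simp add: log_geom_p a_def x_def)
  qed
  ultimately show ?thesis
    unfolding opt_max_redundancy_def by (intro INF_lower2) auto
qed

text \<open>By the Kraft inequality, lengths with redundancy below \<open>L\<close> would give
  \<open>staircase_tail x \<le> a\<close>.\<close>
theorem opt_max_redundancy_ge:
  fixes \<theta> L :: real
  assumes \<theta>: "1/2 \<le> \<theta>" "\<theta> < 1"
  defines "a \<equiv> - log 2 \<theta>" and "x \<equiv> L - log 2 (1 - \<theta>)"
  assumes tail: "a < staircase_tail x"
  shows "ereal L \<le> opt_max_redundancy \<theta>"
  unfolding opt_max_redundancy_def
proof (rule INF_greatest)
  fix n assume "n \<in> {n. prefix_code_lengths n}"
  then obtain c where c: "prefix_code c" and len: "\<And>i. length (c i) = n i"
    unfolding prefix_code_lengths_def by auto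
  have a: "0 < a" "a \<le> 1"
    unfolding a_def using neg_log2_pos_le_1[OF \<theta>] by simp_all
  show "ereal L \<le> max_redundancy n (geom_p \<theta>)"
  proof (rule ccontr)
    assume "\<not> ereal L \<le> max_redundancy n (geom_p \<theta>)"
    then have below: "max_redundancy n (geom_p \<theta>) < ereal L"
      by simp
    have staircase_le: "staircase (x + real i * a) \<le> (1/2) ^ n i" for i
    proof -
      have "ereal (real (n i) + log 2 (geom_p \<theta> i)) < ereal L"
        using below unfolding max_redundancy_def by (rule le_less_trans[OF SUP_upper, rotated]) simp
      then have "real (n i) < x + real i * a"
        using \<theta> by (simp add: log_geom_p a_def x_def)
      then show ?thesis
        unfolding staircase_le_power_iff by (simp add: le_floor_iff)
    qed
    have sum_le: "(\<Sum>i<K. staircase (x + real i * a)) \<le> 1" for K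
    proof -
      have "(\<Sum>i<K. staircase (x + real i * a)) \<le> (\<Sum>i<K. (1/2) ^ length (c i))"
        unfolding len by (intro sum_mono staircase_le)
      also have "\<dots> \<le> 1"
        by (rule kraft_inequality[OF c])
      finally show ?thesis .
    qed
    obtain K where K: "staircase_tail (x + real K * a) < staircase_tail x - a"
      using ex_staircase_tail_less[OF a(1)] tail by (metis diff_gt_0_iff_gt)
    have "staircase_tail x - staircase_tail (x + real K * a)
        \<le> a * (\<Sum>i<K. staircase (x + real i * a))"
      using staircase_tail_diff_le_sum[OF a] .
    also have "\<dots> \<le> a"
      using sum_le[of K] a by (simp add: mult_le_cancel_left1)
    finally show False
      using K by simp
  qed
qed

section \<open>Asymptotics as \<open>\<theta> \<rightarrow> 1\<close>\<close>

definition log2_e :: real where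
  "log2_e = log 2 (exp 1)"

lemma log2_e_eq: "log2_e = 1 / ln 2"
  by (simp add: log2_e_def)

lemma log2_e_gt_1: "1 < log2_e"
  using ln_2_less_1 by (simp add: log2_e_eq)

lemma log2_e_less_2: "log2_e < 2"
  using ln2_ge_two_thirds by (simp add: log2_e_eq field_simps)

lemma neg_log2_ge:
  assumes "0 < \<theta>"
  shows "(1 - \<theta>) * log2_e \<le> - log 2 \<theta>"
proof -
  have "1 - \<theta> \<le> - ln \<theta>"
    using ln_le_minus_one[OF assms] by simp
  then show ?thesis
    using divide_right_mono[of "1 - \<theta>" "- ln \<theta>" "ln 2"] by (simp add: log_def log2_e_eq)
qed

lemma neg_log2_le:
  assumes "0 < \<theta>"
  shows "- log 2 \<theta> \<le> (1 - \<theta>) * log2_e / \<theta>"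
proof -
  have "ln (1 / \<theta>) \<le> 1 / \<theta> - 1"
    using assms by (intro ln_le_minus_one) simp
  then have "- ln \<theta> \<le> (1 - \<theta>) / \<theta>"
    using assms by (simp add: ln_div diff_divide_distrib)
  then show ?thesis
    using divide_right_mono[of "- ln \<theta>" "(1 - \<theta>) / \<theta>" "ln 2"]
    by (simp add: log_def log2_e_eq mult.commute)
qed

text \<open>The bound is attained at \<open>r = 2 - log2_e\<close>.\<close>
lemma tail_profile_le: "tail_profile r \<le> log2_e * 2 powr (2 - log2_e)"
proof -
  define y where "y = 2 - log2_e - r"
  have "1 + y * ln 2 \<le> 2 powr y"
    using exp_ge_add_one_self[of "y * ln 2"] by (simp add: powr_def)
  then have "log2_e * (1 + y * ln 2) \<le> log2_e * 2 powr y"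
    using log2_e_gt_1 by (intro mult_left_mono) auto
  then have "2 - r \<le> log2_e * 2 powr y"
    by (simp add: log2_e_eq y_def algebra_simps)
  then have "tail_profile r \<le> 2 powr r * (log2_e * 2 powr y)"
    unfolding tail_profile_def by (intro mult_left_mono) auto
  also have "\<dots> = log2_e * 2 powr (2 - log2_e)"
    by (simp add: y_def powr_add[symmetric])
  finally show ?thesis .
qed

lemma tail_profile_ge:
  assumes "0 \<le> r" "r \<le> 1"
  shows "2 \<le> tail_profile r"
proof -
  have "exp ((1 - (1 - r)) *\<^sub>R 0 + (1 - r) *\<^sub>R ln 2) \<le> (1 - (1 - r)) * exp 0 + (1 - r) * exp (ln 2)"
    using convex_onD[OF exp_convex, of "1 - r" 0 "ln 2"] assms by simp
  then have "2 powr (1 - r) \<le> 2 - r"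
    by (simp add: powr_def algebra_simps)
  then have "2 powr r * 2 powr (1 - r) \<le> 2 powr r * (2 - r)"
    by (intro mult_left_mono) auto
  then show ?thesis
    by (simp add: tail_profile_def powr_add[symmetric])
qed

lemma staircase_tail_shift:
  assumes "\<theta> < 1"
  shows "staircase_tail (R - log 2 (1 - \<theta>))
    = (1 - \<theta>) * 2 powr (- R) * tail_profile (frac (R - log 2 (1 - \<theta>)))"
  using assms by (simp add: staircase_tail_eq_profile powr_diff powr_minus divide_inverse)

lemma eventually_opt_max_redundancy_le:
  assumes "0 < \<epsilon>"
  shows "\<forall>\<^sub>F \<theta> in at_left 1.
    2 powr (- R) * tail_profile (frac (R - log 2 (1 - \<theta>))) \<le> log2_e * 2 powr (- \<epsilon>)
    \<longrightarrow> opt_max_redundancy \<theta> \<le> ereal R"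
proof -
  have "((\<lambda>\<theta>. 1 - 2 powr (1 - R) * (1 - \<theta>)) \<longlongrightarrow> 1) (at_left 1)"
    by (auto intro!: tendsto_eq_intros)
  moreover have "2 powr (- \<epsilon>) < 1"
    using powr_less_one[of 2 "- \<epsilon>"] assms by simp
  ultimately have "\<forall>\<^sub>F \<theta> in at_left 1. 2 powr (- \<epsilon>) < 1 - 2 powr (1 - R) * (1 - \<theta>)"
    by (rule order_tendstoD)
  moreover have "\<forall>\<^sub>F \<theta> in at_left 1. \<theta> \<in> {1/2::real<..<1}"
    by (rule eventually_at_left_real) simp
  ultimately show ?thesis
  proof eventually_elim
    case (elim \<theta>)
    define x where "x = R - log 2 (1 - \<theta>)"
    have \<theta>: "1/2 \<le> \<theta>" "\<theta> < 1"
      using elim by auto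
    have "staircase x \<le> 2 powr (1 - R) * (1 - \<theta>)"
      using staircase_le[of x] \<theta> by (simp add: x_def powr_diff powr_add)
    then have margin: "2 powr (- \<epsilon>) \<le> 1 - staircase x"
      using elim by linarith
    show ?case
      unfolding x_def[symmetric]
    proof
      assume profile: "2 powr (- R) * tail_profile (frac x) \<le> log2_e * 2 powr (- \<epsilon>)"
      have "staircase_tail x = (1 - \<theta>) * (2 powr (- R) * tail_profile (frac x))"
        using staircase_tail_shift[OF \<theta>(2)] by (simp add: x_def)
      also have "\<dots> \<le> ((1 - \<theta>) * log2_e) * 2 powr (- \<epsilon>)"
        unfolding mult.assoc using profile \<theta> by (intro mult_left_mono) simp_all
      also have "\<dots> \<le> - log 2 \<theta> * (1 - staircase x)"
        using neg_log2_ge[of \<theta>] margin \<theta> log2_e_gt_1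
        by (intro mult_mono) simp_all
      finally show "opt_max_redundancy \<theta> \<le> ereal R"
        using opt_max_redundancy_le[OF \<theta>] by (simp add: x_def)
    qed
  qed
qed

lemma eventually_opt_max_redundancy_ge:
  assumes "0 < \<epsilon>"
  shows "\<forall>\<^sub>F \<theta> in at_left 1.
    log2_e * 2 powr \<epsilon> \<le> 2 powr (- L) * tail_profile (frac (L - log 2 (1 - \<theta>)))
    \<longrightarrow> ereal L \<le> opt_max_redundancy \<theta>"
proof -
  have "2 powr (- \<epsilon>) < 1"
    using powr_less_one[of 2 "- \<epsilon>"] assms by simp
  then have "\<forall>\<^sub>F \<theta> in at_left 1. \<theta> \<in> {max (1/2) (2 powr (- \<epsilon>))<..<1}"
    by (intro eventually_at_left_real) simp
  then show ?thesis
  proof (rule eventually_mono, intro impI)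
    fix \<theta> :: real
    assume "\<theta> \<in> {max (1/2) (2 powr (- \<epsilon>))<..<1}"
    then have \<theta>: "1/2 \<le> \<theta>" "\<theta> < 1" and "2 powr (- \<epsilon>) < \<theta>"
      by auto
    then have "1 / \<theta> < 2 powr \<epsilon>"
      by (simp add: field_simps powr_minus)
    assume profile: "log2_e * 2 powr \<epsilon>
      \<le> 2 powr (- L) * tail_profile (frac (L - log 2 (1 - \<theta>)))"
    have "- log 2 \<theta> \<le> ((1 - \<theta>) * log2_e) * (1 / \<theta>)"
      using neg_log2_le[of \<theta>] \<theta> by simp
    also have "\<dots> < ((1 - \<theta>) * log2_e) * 2 powr \<epsilon>"
      using \<open>1 / \<theta> < 2 powr \<epsilon>\<close> \<theta> log2_e_gt_1 by (intro mult_strict_left_mono) simp_all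
    also have "\<dots> \<le> (1 - \<theta>) * (2 powr (- L) * tail_profile (frac (L - log 2 (1 - \<theta>))))"
      unfolding mult.assoc using profile \<theta> by (intro mult_left_mono) simp_all
    also have "\<dots> = staircase_tail (L - log 2 (1 - \<theta>))"
      using staircase_tail_shift[OF \<theta>(2)] by simp
    finally show "ereal L \<le> opt_max_redundancy \<theta>"
      by (rule opt_max_redundancy_ge[OF \<theta>])
  qed
qed

text \<open>Along \<open>\<theta>\<^sub>N = 1 - 2 ^ (c - r - N)\<close> the shifted point \<open>c - log 2 (1 - \<theta>\<^sub>N) = r + N\<close>
  has fractional part \<open>r\<close>.\<close>
lemma frequently_frac_eq:
  assumes "0 \<le> r" "r < 1"
  shows "\<exists>\<^sub>F \<theta> in at_left 1. frac (c - log 2 (1 - \<theta>)) = r"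
proof -
  define \<theta> where "\<theta> N = 1 - 2 powr (c - r) * (1/2) ^ N" for N :: nat
  have "\<theta> \<longlonglongrightarrow> 1"
    unfolding \<theta>_def by (auto intro!: tendsto_eq_intros LIMSEQ_power_zero)
  then have lim: "filterlim \<theta> (at_left 1) sequentially"
    by (rule tendsto_imp_filterlim_at_left) (simp add: \<theta>_def)
  have frac_\<theta>: "frac (c - log 2 (1 - \<theta> N)) = r" for N
  proof -
    have "log 2 (1 - \<theta> N) = (c - r) - real N"
      by (simp add: \<theta>_def log_mult log_nat_power log_divide)
    then show ?thesis
      using assms by (simp add: frac_unique_iff)
  qed
  show ?thesis
    unfolding frequently_def
  proof
    assume "\<forall>\<^sub>F \<theta> in at_left 1. \<not> frac (c - log 2 (1 - \<theta>)) = r"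
    then have "\<forall>\<^sub>F N in sequentially. \<not> frac (c - log 2 (1 - \<theta> N)) = r"
      using lim by (rule eventually_compose_filterlim)
    then show False
      using frac_\<theta> by simp
  qed
qed

lemma eventually_opt_max_redundancy_less:
  assumes "2 - log2_e < y"
  shows "\<forall>\<^sub>F \<theta> in at_left 1. opt_max_redundancy \<theta> < ereal y"
proof -
  define \<epsilon> where "\<epsilon> = (y - (2 - log2_e)) / 2"
  define R where "R = 2 - log2_e + \<epsilon>"
  have "0 < \<epsilon>"
    using assms by (simp add: \<epsilon>_def)
  have "R < y"
    using assms by (simp add: \<epsilon>_def R_def field_simps)
  have profile: "2 powr (- R) * tail_profile r \<le> log2_e * 2 powr (- \<epsilon>)" for r
  proof -
    have "2 powr (- R) * tail_profile r \<le> 2 powr (- R) * (log2_e * 2 powr (2 - log2_e))"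
      by (intro mult_left_mono tail_profile_le) simp
    also have "\<dots> = log2_e * 2 powr (- \<epsilon>)"
      by (simp add: R_def powr_add[symmetric])
    finally show ?thesis .
  qed
  show ?thesis
    using eventually_opt_max_redundancy_le[OF \<open>0 < \<epsilon>\<close>, of R]
  proof (rule eventually_mono)
    fix \<theta>
    assume "2 powr (- R) * tail_profile (frac (R - log 2 (1 - \<theta>))) \<le> log2_e * 2 powr (- \<epsilon>)
      \<longrightarrow> opt_max_redundancy \<theta> \<le> ereal R"
    then have "opt_max_redundancy \<theta> \<le> ereal R"
      using profile by blast
    also have "ereal R < ereal y"
      using \<open>R < y\<close> by simp
    finally show "opt_max_redundancy \<theta> < ereal y" .
  qed
qed

lemma eventually_opt_max_redundancy_greater:
  assumes "y < 1 - log 2 log2_e"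
  shows "\<forall>\<^sub>F \<theta> in at_left 1. ereal y < opt_max_redundancy \<theta>"
proof -
  define \<epsilon> where "\<epsilon> = (1 - log 2 log2_e - y) / 2"
  define L where "L = 1 - log 2 log2_e - \<epsilon>"
  have "0 < \<epsilon>"
    using assms by (simp add: \<epsilon>_def)
  have "y < L"
    using assms by (simp add: \<epsilon>_def L_def field_simps)
  have profile: "log2_e * 2 powr \<epsilon> \<le> 2 powr (- L) * tail_profile (frac x)" for x
  proof -
    have "log2_e * 2 powr \<epsilon> = 2 powr (- L) * 2"
      using log2_e_gt_1 by (simp add: L_def powr_add powr_diff)
    also have "\<dots> \<le> 2 powr (- L) * tail_profile (frac x)"
      using tail_profile_ge[of "frac x"] frac_lt_1[of x] by (intro mult_left_mono) simp_all
    finally show ?thesis .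
  qed
  show ?thesis
    using eventually_opt_max_redundancy_ge[OF \<open>0 < \<epsilon>\<close>, of L]
  proof (rule eventually_mono)
    fix \<theta>
    assume bound: "log2_e * 2 powr \<epsilon> \<le> 2 powr (- L) * tail_profile (frac (L - log 2 (1 - \<theta>)))
      \<longrightarrow> ereal L \<le> opt_max_redundancy \<theta>"
    have "ereal y < ereal L"
      using \<open>y < L\<close> by simp
    also have "ereal L \<le> opt_max_redundancy \<theta>"
      using bound profile by blast
    finally show "ereal y < opt_max_redundancy \<theta>" .
  qed
qed

lemma frequently_opt_max_redundancy_less:
  assumes "1 - log 2 log2_e < y"
  shows "\<exists>\<^sub>F \<theta> in at_left 1. opt_max_redundancy \<theta> < ereal y"
proof -
  define \<epsilon> where "\<epsilon> = (y - (1 - log 2 log2_e)) / 2"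
  define R where "R = 1 - log 2 log2_e + \<epsilon>"
  have "0 < \<epsilon>"
    using assms by (simp add: \<epsilon>_def)
  have "R < y"
    using assms by (simp add: \<epsilon>_def R_def field_simps)
  have "2 powr (- R) * tail_profile 0 = 2 powr (log 2 log2_e + - \<epsilon>)"
    using powr_mult_base[of 2 "- R"] by (simp add: tail_profile_def R_def mult.commute)
  also have "\<dots> = log2_e * 2 powr (- \<epsilon>)"
    using log2_e_gt_1 by (simp only: powr_add) simp
  finally have profile: "2 powr (- R) * tail_profile 0 = log2_e * 2 powr (- \<epsilon>)" .
  have "\<forall>\<^sub>F \<theta> in at_left 1. frac (R - log 2 (1 - \<theta>)) = 0 \<longrightarrow> opt_max_redundancy \<theta> < ereal y"
    using eventually_opt_max_redundancy_le[OF \<open>0 < \<epsilon>\<close>, of R]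
  proof (rule eventually_mono, intro impI)
    fix \<theta>
    assume "2 powr (- R) * tail_profile (frac (R - log 2 (1 - \<theta>))) \<le> log2_e * 2 powr (- \<epsilon>)
      \<longrightarrow> opt_max_redundancy \<theta> \<le> ereal R"
      and "frac (R - log 2 (1 - \<theta>)) = 0"
    then have "opt_max_redundancy \<theta> \<le> ereal R"
      using profile by simp
    also have "ereal R < ereal y"
      using \<open>R < y\<close> by simp
    finally show "opt_max_redundancy \<theta> < ereal y" .
  qed
  moreover have "\<exists>\<^sub>F \<theta> in at_left 1. frac (R - log 2 (1 - \<theta>)) = 0"
    by (rule frequently_frac_eq) simp_all
  ultimately show ?thesis
    by (rule frequently_mp)
qed

lemma frequently_opt_max_redundancy_greater:
  assumes "y < 2 - log2_e"
  shows "\<exists>\<^sub>F \<theta> in at_left 1. ereal y < opt_max_redundancy \<theta>"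
proof -
  define \<epsilon> where "\<epsilon> = (2 - log2_e - y) / 2"
  define L where "L = 2 - log2_e - \<epsilon>"
  have "0 < \<epsilon>"
    using assms by (simp add: \<epsilon>_def)
  have "y < L"
    using assms by (simp add: \<epsilon>_def L_def field_simps)
  have profile: "2 powr (- L) * tail_profile (2 - log2_e) = log2_e * 2 powr \<epsilon>"
    by (simp add: tail_profile_def L_def powr_add[symmetric])
  have "\<forall>\<^sub>F \<theta> in at_left 1. frac (L - log 2 (1 - \<theta>)) = 2 - log2_e
      \<longrightarrow> ereal y < opt_max_redundancy \<theta>"
    using eventually_opt_max_redundancy_ge[OF \<open>0 < \<epsilon>\<close>, of L]
  proof (rule eventually_mono, intro impI)
    fix \<theta>
    assume bound: "log2_e * 2 powr \<epsilon> \<le> 2 powr (- L) * tail_profile (frac (L - log 2 (1 - \<theta>)))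
      \<longrightarrow> ereal L \<le> opt_max_redundancy \<theta>"
      and frac: "frac (L - log 2 (1 - \<theta>)) = 2 - log2_e"
    have "ereal y < ereal L"
      using \<open>y < L\<close> by simp
    also have "ereal L \<le> opt_max_redundancy \<theta>"
      using bound frac profile by simp
    finally show "ereal y < opt_max_redundancy \<theta>" .
  qed
  moreover have "\<exists>\<^sub>F \<theta> in at_left 1. frac (L - log 2 (1 - \<theta>)) = 2 - log2_e"
    using log2_e_gt_1 log2_e_less_2 by (intro frequently_frac_eq) simp_all
  ultimately show ?thesis
    by (rule frequently_mp)
qed

lemma Liminf_eq_ereal:
  fixes f :: "'a \<Rightarrow> ereal"
  assumes above: "\<And>y. y < c \<Longrightarrow> \<forall>\<^sub>F x in F. ereal y < f x"
    and below: "\<And>y. c < y \<Longrightarrow> \<exists>\<^sub>F x in F. f x < ereal y"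
  shows "Liminf F f = ereal c"
proof (rule antisym)
  show "ereal c \<le> Liminf F f"
    unfolding le_Liminf_iff
  proof (intro allI impI)
    fix y assume "y < ereal c"
    then obtain z where "y < ereal z" "ereal z < ereal c"
      using ereal_dense2 by blast
    then show "\<forall>\<^sub>F x in F. y < f x"
      using above[of z] by (auto elim: eventually_mono)
  qed
  show "Liminf F f \<le> ereal c"
  proof (rule ccontr)
    assume "\<not> Liminf F f \<le> ereal c"
    then have "ereal c < Liminf F f"
      by simp
    then obtain z where "ereal c < ereal z" "ereal z < Liminf F f"
      using ereal_dense2 by blast
    have "\<forall>\<^sub>F x in F. f x < ereal z \<longrightarrow> False"
      using less_LiminfD[OF \<open>ereal z < Liminf F f\<close>] by (rule eventually_mono) auto
    moreover have "\<exists>\<^sub>F x in F. f x < ereal z"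
      using below \<open>ereal c < ereal z\<close> by simp
    ultimately have "\<exists>\<^sub>F x in F. False"
      by (rule frequently_mp)
    then show False
      by simp
  qed
qed

lemma Limsup_eq_ereal:
  fixes f :: "'a \<Rightarrow> ereal"
  assumes below: "\<And>y. c < y \<Longrightarrow> \<forall>\<^sub>F x in F. f x < ereal y"
    and above: "\<And>y. y < c \<Longrightarrow> \<exists>\<^sub>F x in F. ereal y < f x"
  shows "Limsup F f = ereal c"
proof (rule antisym)
  show "Limsup F f \<le> ereal c"
    unfolding Limsup_le_iff
  proof (intro allI impI)
    fix y assume "ereal c < y"
    then obtain z where "ereal c < ereal z" "ereal z < y"
      using ereal_dense2 by blast
    then show "\<forall>\<^sub>F x in F. f x < y"
      using below[of z] by (auto elim: eventually_mono)
  qed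
  show "ereal c \<le> Limsup F f"
  proof (rule ccontr)
    assume "\<not> ereal c \<le> Limsup F f"
    then have "Limsup F f < ereal c"
      by simp
    then obtain z where "Limsup F f < ereal z" "ereal z < ereal c"
      using ereal_dense2 by blast
    have "\<forall>\<^sub>F x in F. ereal z < f x \<longrightarrow> False"
      using Limsup_lessD[OF \<open>Limsup F f < ereal z\<close>] by (rule eventually_mono) auto
    moreover have "\<exists>\<^sub>F x in F. ereal z < f x"
      using above \<open>ereal z < ereal c\<close> by simp
    ultimately have "\<exists>\<^sub>F x in F. False"
      by (rule frequently_mp)
    then show False
      by simp
  qed
qed

theorem mainTheorem7:
  shows "Liminf (at_left 1) opt_max_redundancy = ereal (1 - log 2 (log 2 (exp 1)))
     \<and> Limsup (at_left 1) opt_max_redundancy = ereal (2 - log 2 (exp 1))"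
  unfolding log2_e_def[symmetric]
proof
  show "Liminf (at_left 1) opt_max_redundancy = ereal (1 - log 2 log2_e)"
    using eventually_opt_max_redundancy_greater frequently_opt_max_redundancy_less
    by (rule Liminf_eq_ereal)
  show "Limsup (at_left 1) opt_max_redundancy = ereal (2 - log2_e)"
    using eventually_opt_max_redundancy_less frequently_opt_max_redundancy_greater
    by (rule Limsup_eq_ereal)
qed

end
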